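(* Let $V$ be a vector space of dimension $n\ge3$ over $\mathbb{F}_q$, let $w$ be a $1$-subspace (point) and $H$ a hyperplane of $V$ with $w\le H$. Let $\Delta^{(1)}$ be the set of $1$-subspaces of $V$ not contained in $H$ and $\Delta^{(2)}$ the set of hyperplanes of $V$ not containing $w$. Let $\Gamma$ be the bipartite graph with vertex set $\Delta^{(1)}\cup\Delta^{(2)}$ in which a point $p\in\Delta^{(1)}$ is adjacent to a hyperplane $K\in\Delta^{(2)}$ iff $p\le K$. Then $\Gamma$ is geodesic-transitive.
   Context: A geodesic of length $\ell$ is a vertex sequence $(v_0,\dots,v_\ell)$ with consecutive vertices adjacent and $d(v_0,v_\ell)=\ell$; a graph is geodesic-transitive if its automorphism group is transitive on geodesics of each length. (This graph is a distance-transitive antipodal $q$-cover of $K_{q^{n-2},q^{n-2}}$ of diameter $4$.) *)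

theory Defs
  imports "HOL-Analysis.Analysis"
begin

definition is_walk :: "'v set \<Rightarrow> ('v \<Rightarrow> 'v \<Rightarrow> bool) \<Rightarrow> 'v list \<Rightarrow> bool" where
  "is_walk VV E vs \<longleftrightarrow> vs \<noteq> [] \<and> set vs \<subseteq> VV \<and>
     (\<forall>i. Suc i < length vs \<longrightarrow> E (vs ! i) (vs ! Suc i))"

definition gdist :: "'v set \<Rightarrow> ('v \<Rightarrow> 'v \<Rightarrow> bool) \<Rightarrow> 'v \<Rightarrow> 'v \<Rightarrow> nat" where
  "gdist VV E u v = (LEAST l. \<exists>vs. is_walk VV E vs \<and> hd vs = u \<and> last vs = v \<and> length vs = Suc l)"

definition is_geodesic :: "'v set \<Rightarrow> ('v \<Rightarrow> 'v \<Rightarrow> bool) \<Rightarrow> 'v list \<Rightarrow> bool" where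
  "is_geodesic VV E vs \<longleftrightarrow> is_walk VV E vs \<and> gdist VV E (hd vs) (last vs) = length vs - 1"

definition graph_aut :: "'v set \<Rightarrow> ('v \<Rightarrow> 'v \<Rightarrow> bool) \<Rightarrow> ('v \<Rightarrow> 'v) \<Rightarrow> bool" where
  "graph_aut VV E \<sigma> \<longleftrightarrow> bij_betw \<sigma> VV VV \<and> (\<forall>u\<in>VV. \<forall>v\<in>VV. E u v \<longleftrightarrow> E (\<sigma> u) (\<sigma> v))"

definition geodesic_transitive :: "'v set \<Rightarrow> ('v \<Rightarrow> 'v \<Rightarrow> bool) \<Rightarrow> bool" where
  "geodesic_transitive VV E \<longleftrightarrow>
     (\<forall>xs ys. is_geodesic VV E xs \<and> is_geodesic VV E ys \<and> length xs = length ys \<longrightarrow>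
        (\<exists>\<sigma>. graph_aut VV E \<sigma> \<and> map \<sigma> xs = ys))"

definition is_point :: "('a::field ^ 'n) set \<Rightarrow> bool" where
  "is_point p \<longleftrightarrow> vec.subspace p \<and> vec.dim p = 1"

definition is_hyperplane :: "('a::field ^ 'n) set \<Rightarrow> bool" where
  "is_hyperplane K \<longleftrightarrow> vec.subspace K \<and> vec.dim K = CARD('n) - 1"

definition Delta1 :: "('a::field ^ 'n) set \<Rightarrow> ('a ^ 'n) set set" where
  "Delta1 H = {p. is_point p \<and> \<not> p \<subseteq> H}"

definition Delta2 :: "('a::field ^ 'n) set \<Rightarrow> ('a ^ 'n) set set" where
  "Delta2 w = {K. is_hyperplane K \<and> \<not> w \<subseteq> K}"

definition Gamma_adj :: "('a::field ^ 'n) set \<Rightarrow> ('a ^ 'n) set \<Rightarrow> ('a ^ 'n) set \<Rightarrow> ('a ^ 'n) set \<Rightarrow> bool" where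
  "Gamma_adj w H x y \<longleftrightarrow>
     (x \<in> Delta1 H \<and> y \<in> Delta2 w \<and> x \<subseteq> y) \<or> (y \<in> Delta1 H \<and> x \<in> Delta2 w \<and> y \<subseteq> x)"

end

theory Submission
  imports Defs
begin

(* Since GL(V) is transitive on incident point-hyperplane pairs, we may take w = <e_a> and
   H = e_b^perp.  Then the points of Delta1 are the lines <v> with v_b ~= 0, the hyperplanes of
   Delta2 are the c^perp with c_a ~= 0, and <v> ~ c^perp iff c . v = 0.  The invertible maps
   z |-> z + (alpha . z) u fixing w and H, together with the polarity <v> |-> (v with the
   coordinates a, b swapped)^perp, are automorphisms of Gamma.  Gamma has diameter 4, and for
   the fixed geodesic <e_b>, e_a^perp, <e_b + e_d>, (e_a + e_b - e_d)^perp, <e_b - e_a> the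
   stabiliser of each initial segment is transitive on the vertices that extend it to a geodesic
   (for the last vertex there is only one).  Hence every geodesic is the image of a prefix of
   this one under an automorphism. *)

section \<open>Graph isomorphisms and geodesics\<close>

definition graph_iso ::
  "'v set \<Rightarrow> ('v \<Rightarrow> 'v \<Rightarrow> bool) \<Rightarrow> 'w set \<Rightarrow> ('w \<Rightarrow> 'w \<Rightarrow> bool) \<Rightarrow> ('v \<Rightarrow> 'w) \<Rightarrow> bool" where
  "graph_iso V E V' E' \<phi> \<longleftrightarrow> bij_betw \<phi> V V' \<and> (\<forall>u\<in>V. \<forall>v\<in>V. E u v \<longleftrightarrow> E' (\<phi> u) (\<phi> v))"

lemma graph_aut_iff_iso: "graph_aut V E \<sigma> \<longleftrightarrow> graph_iso V E V E \<sigma>"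
  by (simp add: graph_aut_def graph_iso_def)

lemma graph_iso_mem: "graph_iso V E V' E' \<phi> \<Longrightarrow> x \<in> V \<Longrightarrow> \<phi> x \<in> V'"
  unfolding graph_iso_def by (blast dest: bij_betwE)

lemma graph_iso_inv_into_left: "graph_iso V E V' E' \<phi> \<Longrightarrow> x \<in> V \<Longrightarrow> inv_into V \<phi> (\<phi> x) = x"
  unfolding graph_iso_def by (blast intro: inv_into_f_f dest: bij_betw_imp_inj_on)

lemma graph_iso_inv_into_right: "graph_iso V E V' E' \<phi> \<Longrightarrow> y \<in> V' \<Longrightarrow> \<phi> (inv_into V \<phi> y) = y"
  unfolding graph_iso_def by (blast intro: bij_betw_inv_into_right)

lemma graph_iso_map_inv_into_left:
  "graph_iso V E V' E' \<phi> \<Longrightarrow> set xs \<subseteq> V \<Longrightarrow> map (inv_into V \<phi>) (map \<phi> xs) = xs"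
  by (induction xs) (auto simp: graph_iso_inv_into_left)

lemma graph_iso_map_inv_into_right:
  "graph_iso V E V' E' \<phi> \<Longrightarrow> set ys \<subseteq> V' \<Longrightarrow> map \<phi> (map (inv_into V \<phi>) ys) = ys"
  by (induction ys) (auto simp: graph_iso_inv_into_right)

lemma graph_iso_inv_into:
  assumes "graph_iso V E V' E' \<phi>"
  shows "graph_iso V' E' V E (inv_into V \<phi>)"
  unfolding graph_iso_def
proof (intro conjI ballI)
  show inv: "bij_betw (inv_into V \<phi>) V' V"
    using assms bij_betw_inv_into by (auto simp: graph_iso_def)
  fix u v assume "u \<in> V'" "v \<in> V'"
  then have "inv_into V \<phi> u \<in> V" "inv_into V \<phi> v \<in> V"
    and "\<phi> (inv_into V \<phi> u) = u" "\<phi> (inv_into V \<phi> v) = v"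
    using inv graph_iso_inv_into_right[OF assms] by (auto simp: bij_betw_def)
  then show "E' u v \<longleftrightarrow> E (inv_into V \<phi> u) (inv_into V \<phi> v)"
    using assms unfolding graph_iso_def by metis
qed

lemma graph_iso_comp:
  assumes "graph_iso V E V' E' \<phi>" "graph_iso V' E' V'' E'' \<psi>"
  shows "graph_iso V E V'' E'' (\<psi> \<circ> \<phi>)"
proof -
  have "\<phi> u \<in> V'" if "u \<in> V" for u
    using graph_iso_mem[OF assms(1) that] .
  with assms show ?thesis
    unfolding graph_iso_def by (auto intro: bij_betw_trans)
qed

lemma graph_aut_id: "graph_aut V E id"
  by (simp add: graph_aut_def)

lemma graph_aut_comp: "graph_aut V E \<sigma> \<Longrightarrow> graph_aut V E \<tau> \<Longrightarrow> graph_aut V E (\<sigma> \<circ> \<tau>)"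
  unfolding graph_aut_iff_iso by (rule graph_iso_comp)

lemma graph_aut_inv_into: "graph_aut V E \<sigma> \<Longrightarrow> graph_aut V E (inv_into V \<sigma>)"
  unfolding graph_aut_iff_iso by (rule graph_iso_inv_into)

lemma not_is_walk_Nil [simp]: "\<not> is_walk V E []"
  by (simp add: is_walk_def)

lemma is_walk_singleton [simp]: "is_walk V E [x] \<longleftrightarrow> x \<in> V"
  by (simp add: is_walk_def)

lemma is_walk_Cons_Cons [simp]:
  "is_walk V E (x # y # zs) \<longleftrightarrow> x \<in> V \<and> E x y \<and> is_walk V E (y # zs)"
proof
  assume h: "is_walk V E (x # y # zs)"
  have "E x y"
    using h unfolding is_walk_def by (metis length_Cons nth_Cons_0 nth_Cons_Suc zero_less_Suc Suc_less_eq)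
  moreover have "is_walk V E (y # zs)"
    using h unfolding is_walk_def by (auto simp del: nth_Cons_Suc)
  ultimately show "x \<in> V \<and> E x y \<and> is_walk V E (y # zs)" using h by (simp add: is_walk_def)
next
  assume h: "x \<in> V \<and> E x y \<and> is_walk V E (y # zs)"
  have "E ((x # y # zs) ! i) ((x # y # zs) ! Suc i)" if "Suc i < length (x # y # zs)" for i
  proof (cases i)
    case 0
    then show ?thesis using h by simp
  next
    case (Suc j)
    then show ?thesis using h that by (simp add: is_walk_def)
  qed
  with h show "is_walk V E (x # y # zs)" by (simp add: is_walk_def)
qed

lemma is_walk_map:
  assumes "graph_iso V E V' E' \<phi>" "is_walk V E vs"
  shows "is_walk V' E' (map \<phi> vs)"
proof -
  have "\<forall>x\<in>V. \<phi> x \<in> V'" and "\<forall>u\<in>V. \<forall>v\<in>V. E u v \<longleftrightarrow> E' (\<phi> u) (\<phi> v)"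
    using assms(1) by (auto simp: graph_iso_def bij_betw_def)
  with assms(2) show ?thesis
    unfolding is_walk_def by (auto simp: subset_iff)
qed

lemma is_walk_take:
  assumes "is_walk V E xs" "0 < k"
  shows "is_walk V E (take k xs)"
proof -
  have "xs \<noteq> []" "set xs \<subseteq> V" "\<forall>i. Suc i < length xs \<longrightarrow> E (xs ! i) (xs ! Suc i)"
    using assms(1) by (auto simp: is_walk_def)
  moreover have "set (take k xs) \<subseteq> set xs"
    by (rule set_take_subset)
  ultimately show ?thesis
    using assms(2) unfolding is_walk_def by simp
qed

lemma is_walk_drop:
  assumes "is_walk V E xs" "k < length xs"
  shows "is_walk V E (drop k xs)"
proof -
  have "xs \<noteq> []" "set xs \<subseteq> V" "\<forall>i. Suc i < length xs \<longrightarrow> E (xs ! i) (xs ! Suc i)"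
    using assms(1) by (auto simp: is_walk_def)
  moreover have "set (drop k xs) \<subseteq> set xs"
    by (rule set_drop_subset)
  ultimately show ?thesis
    using assms(2) unfolding is_walk_def by simp
qed

lemma is_walk_append:
  assumes "is_walk V E xs" "is_walk V E ys" "E (last xs) (hd ys)"
  shows "is_walk V E (xs @ ys)"
  using assms
proof (induction xs rule: induct_list012)
  case 1
  then show ?case by (simp add: is_walk_def)
next
  case (2 x)
  then show ?case by (cases ys) auto
next
  case (3 x y zs)
  then show ?case by simp
qed

lemma gdist_le_walk:
  assumes "is_walk V E vs"
  shows "gdist V E (hd vs) (last vs) \<le> length vs - 1"
proof -
  have "\<exists>ws. is_walk V E ws \<and> hd ws = hd vs \<and> last ws = last vs \<and> length ws = Suc (length vs - 1)"
    using assms by (intro exI[of _ vs]) (auto simp: is_walk_def)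
  then show ?thesis unfolding gdist_def by (rule Least_le)
qed

lemma gdist_attained:
  assumes "is_walk V E vs"
  obtains ws where "is_walk V E ws" "hd ws = hd vs" "last ws = last vs"
    "length ws = Suc (gdist V E (hd vs) (last vs))"
proof -
  let ?P = "\<lambda>l. \<exists>ws. is_walk V E ws \<and> hd ws = hd vs \<and> last ws = last vs \<and> length ws = Suc l"
  have "?P (length vs - 1)"
    using assms by (intro exI[of _ vs]) (auto simp: is_walk_def)
  then have "?P (gdist V E (hd vs) (last vs))"
    unfolding gdist_def by (rule LeastI)
  with that show thesis by blast
qed

lemma gdist_iso:
  assumes iso: "graph_iso V E V' E' \<phi>" and "u \<in> V" "v \<in> V"
  shows "gdist V' E' (\<phi> u) (\<phi> v) = gdist V E u v"
proof -
  let ?\<psi> = "inv_into V \<phi>"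
  have "(\<exists>ws. is_walk V' E' ws \<and> hd ws = \<phi> u \<and> last ws = \<phi> v \<and> length ws = Suc l) \<longleftrightarrow>
        (\<exists>vs. is_walk V E vs \<and> hd vs = u \<and> last vs = v \<and> length vs = Suc l)" for l
  proof
    assume "\<exists>ws. is_walk V' E' ws \<and> hd ws = \<phi> u \<and> last ws = \<phi> v \<and> length ws = Suc l"
    then obtain ws where ws: "is_walk V' E' ws" "hd ws = \<phi> u" "last ws = \<phi> v" "length ws = Suc l"
      by blast
    then have "ws \<noteq> []" by (auto simp: is_walk_def)
    with ws assms show "\<exists>vs. is_walk V E vs \<and> hd vs = u \<and> last vs = v \<and> length vs = Suc l"
      using is_walk_map[OF graph_iso_inv_into[OF iso] ws(1)] graph_iso_inv_into_left[OF iso]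
      by (intro exI[of _ "map ?\<psi> ws"]) (simp add: hd_map last_map)
  next
    assume "\<exists>vs. is_walk V E vs \<and> hd vs = u \<and> last vs = v \<and> length vs = Suc l"
    then obtain vs where vs: "is_walk V E vs" "hd vs = u" "last vs = v" "length vs = Suc l"
      by blast
    then have "vs \<noteq> []" by (auto simp: is_walk_def)
    with vs show "\<exists>ws. is_walk V' E' ws \<and> hd ws = \<phi> u \<and> last ws = \<phi> v \<and> length ws = Suc l"
      using is_walk_map[OF iso vs(1)] by (intro exI[of _ "map \<phi> vs"]) (simp add: hd_map last_map)
  qed
  then show ?thesis
    unfolding gdist_def by presburger
qed

lemma is_geodesic_map:
  assumes iso: "graph_iso V E V' E' \<phi>" and "is_geodesic V E xs"
  shows "is_geodesic V' E' (map \<phi> xs)"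
proof -
  have walk: "is_walk V E xs" and dist: "gdist V E (hd xs) (last xs) = length xs - 1"
    using assms(2) by (auto simp: is_geodesic_def)
  then have "xs \<noteq> []" "hd xs \<in> V" "last xs \<in> V"
    by (auto simp: is_walk_def)
  with walk dist show ?thesis
    unfolding is_geodesic_def using is_walk_map[OF iso] gdist_iso[OF iso]
    by (simp add: hd_map last_map)
qed

lemma geodesic_transitive_iso:
  assumes iso: "graph_iso V E V' E' \<phi>" and "geodesic_transitive V E"
  shows "geodesic_transitive V' E'"
  unfolding geodesic_transitive_def
proof (intro allI impI)
  fix xs ys assume geods: "is_geodesic V' E' xs \<and> is_geodesic V' E' ys \<and> length xs = length ys"
  let ?\<psi> = "inv_into V \<phi>"
  have inv: "graph_iso V' E' V E ?\<psi>"
    using graph_iso_inv_into[OF iso] .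
  obtain \<sigma> where \<sigma>: "graph_aut V E \<sigma>" "map \<sigma> (map ?\<psi> xs) = map ?\<psi> ys"
    using assms(2) geods is_geodesic_map[OF inv] unfolding geodesic_transitive_def by force
  have "map \<phi> (map ?\<psi> zs) = zs" if "is_geodesic V' E' zs" for zs
    using that graph_iso_map_inv_into_right[OF iso] by (simp add: is_geodesic_def is_walk_def)
  with \<sigma>(2) geods have "map (\<phi> \<circ> \<sigma> \<circ> ?\<psi>) xs = ys"
    by (metis map_map)
  moreover have "graph_aut V' E' (\<phi> \<circ> \<sigma> \<circ> ?\<psi>)"
    using graph_iso_comp[OF graph_iso_comp[OF inv \<sigma>(1)[unfolded graph_aut_iff_iso]] iso]
    by (simp add: graph_aut_iff_iso comp_assoc)
  ultimately show "\<exists>\<sigma>. graph_aut V' E' \<sigma> \<and> map \<sigma> xs = ys"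
    by blast
qed

lemma is_geodesic_prefix:
  assumes geod: "is_geodesic V E (xs @ ys)" and "xs \<noteq> []"
  shows "is_geodesic V E xs"
proof (cases "ys = []")
  case True
  with geod show ?thesis by simp
next
  case False
  have walk: "is_walk V E (xs @ ys)" and dist: "gdist V E (hd xs) (last ys) = length xs + length ys - 1"
    using geod \<open>xs \<noteq> []\<close> False by (auto simp: is_geodesic_def)
  have "is_walk V E xs"
    using is_walk_take[OF walk, of "length xs"] \<open>xs \<noteq> []\<close> by simp
  moreover have walk_ys: "is_walk V E ys"
    using is_walk_drop[OF walk, of "length xs"] False by simp
  moreover have link: "E (last xs) (hd ys)"
  proof -
    obtain i where i: "length xs = Suc i"
      using \<open>xs \<noteq> []\<close> by (cases xs) auto
    then have "E ((xs @ ys) ! i) ((xs @ ys) ! Suc i)"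
      using walk False unfolding is_walk_def by simp
    with i \<open>xs \<noteq> []\<close> False show ?thesis
      by (simp add: nth_append last_conv_nth hd_conv_nth)
  qed
  moreover have "\<not> gdist V E (hd xs) (last xs) < length xs - 1"
  proof
    assume shorter: "gdist V E (hd xs) (last xs) < length xs - 1"
    obtain ws where ws: "is_walk V E ws" "hd ws = hd xs" "last ws = last xs"
      "length ws = Suc (gdist V E (hd xs) (last xs))"
      using gdist_attained[OF \<open>is_walk V E xs\<close>] by blast
    have "is_walk V E (ws @ ys)"
      using is_walk_append[OF ws(1) walk_ys] ws(3) link by simp
    from gdist_le_walk[OF this] ws(1,2) False
    have "gdist V E (hd xs) (last ys) \<le> length ws + length ys - 1"
      by (auto simp: is_walk_def)
    with dist shorter ws(4) show False
      by linarith
  qed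
  ultimately show ?thesis
    using gdist_le_walk[of V E xs] by (simp add: is_geodesic_def)
qed

lemma geodesic_gdist_nth:
  assumes "is_geodesic V E zs" "k < length zs"
  shows "gdist V E (zs ! 0) (zs ! k) = k"
proof -
  have ne: "zs \<noteq> []"
    using assms(2) by auto
  then have "is_geodesic V E (take (Suc k) zs)"
    using is_geodesic_prefix[of V E "take (Suc k) zs" "drop (Suc k) zs"] assms(1) by simp
  moreover have "hd (take (Suc k) zs) = zs ! 0"
    using ne by (simp add: hd_conv_nth)
  moreover have "last (take (Suc k) zs) = zs ! k"
    using assms(2) by (simp add: take_Suc_conv_app_nth)
  ultimately show ?thesis
    using assms(2) by (simp add: is_geodesic_def)
qed

context
  fixes V :: "'v set" and E :: "'v \<Rightarrow> 'v \<Rightarrow> bool" and S :: "'v list"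
  assumes set_S: "set S \<subseteq> V"
    and length_geodesic: "\<And>zs. is_geodesic V E zs \<Longrightarrow> length zs \<le> length S"
    and extend_geodesic: "\<And>zs k. is_geodesic V E zs \<Longrightarrow> k < length zs \<Longrightarrow> take k zs = take k S \<Longrightarrow>
      \<exists>\<tau>. graph_aut V E \<tau> \<and> map \<tau> (take k S) = take k S \<and> \<tau> (S ! k) = zs ! k"
begin

lemma geodesic_image_of_prefix:
  "is_geodesic V E zs \<Longrightarrow> \<exists>\<sigma>. graph_aut V E \<sigma> \<and> map \<sigma> (take (length zs) S) = zs"
proof (induction zs rule: rev_induct)
  case Nil
  show ?case
    using graph_aut_id by fastforce
next
  case (snoc z zs)
  define n where "n = length zs"
  have "n < length S"
    using length_geodesic[OF snoc.prems] by (simp add: n_def)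
  obtain \<sigma> where \<sigma>: "graph_aut V E \<sigma>" "map \<sigma> (take n S) = zs"
  proof (cases "zs = []")
    case True
    then show ?thesis
      using that graph_aut_id by (fastforce simp: n_def)
  next
    case False
    then show ?thesis
      using that snoc.IH is_geodesic_prefix[OF snoc.prems] unfolding n_def by blast
  qed
  let ?\<psi> = "inv_into V \<sigma>"
  have \<psi>: "graph_iso V E V E ?\<psi>"
    using graph_aut_inv_into[OF \<sigma>(1)] by (simp add: graph_aut_iff_iso)
  have z: "z \<in> V"
    using snoc.prems by (simp add: is_geodesic_def is_walk_def)
  define ys where "ys = map ?\<psi> (zs @ [z])"
  have geod: "is_geodesic V E ys"
    unfolding ys_def by (rule is_geodesic_map[OF \<psi> snoc.prems])
  have prefix: "take n ys = take n S"
  proof -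
    have "map ?\<psi> zs = take n S"
      using set_S set_take_subset \<sigma>
      by (metis graph_aut_iff_iso graph_iso_map_inv_into_left order_trans)
    then show ?thesis
      using \<open>n < length S\<close> by (simp add: ys_def n_def)
  qed
  have "n < length ys" "ys ! n = ?\<psi> z"
    by (simp_all add: ys_def n_def nth_append)
  with extend_geodesic[OF geod _ prefix]
  obtain \<tau> where \<tau>: "graph_aut V E \<tau>" "map \<tau> (take n S) = take n S" "\<tau> (S ! n) = ?\<psi> z"
    by auto
  have "map (\<sigma> \<circ> \<tau>) (take (length (zs @ [z])) S) = zs @ [\<sigma> (?\<psi> z)]"
    using \<open>n < length S\<close> \<tau>(2,3) \<sigma>(2) by (simp add: n_def take_Suc_conv_app_nth flip: map_map)
  also have "\<sigma> (?\<psi> z) = z"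
    using graph_iso_inv_into_right[OF \<sigma>(1)[unfolded graph_aut_iff_iso] z] .
  finally show ?case
    using graph_aut_comp[OF \<sigma>(1) \<tau>(1)] by blast
qed

lemma geodesic_transitive_by_standard_geodesic: "geodesic_transitive V E"
  unfolding geodesic_transitive_def
proof (intro allI impI)
  fix xs ys assume geods: "is_geodesic V E xs \<and> is_geodesic V E ys \<and> length xs = length ys"
  obtain \<sigma> where \<sigma>: "graph_aut V E \<sigma>" "map \<sigma> (take (length xs) S) = xs"
    using geodesic_image_of_prefix geods by blast
  obtain \<sigma>' where \<sigma>': "graph_aut V E \<sigma>'" "map \<sigma>' (take (length xs) S) = ys"
    using geodesic_image_of_prefix geods by force
  have "map (inv_into V \<sigma>) xs = take (length xs) S"
    using \<sigma> set_S set_take_subset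
    by (metis graph_aut_iff_iso graph_iso_map_inv_into_left order_trans)
  then have "map (\<sigma>' \<circ> inv_into V \<sigma>) xs = ys"
    using \<sigma>'(2) by (metis map_map)
  moreover have "graph_aut V E (\<sigma>' \<circ> inv_into V \<sigma>)"
    using graph_aut_comp[OF \<sigma>'(1) graph_aut_inv_into[OF \<sigma>(1)]] .
  ultimately show "\<exists>\<tau>. graph_aut V E \<tau> \<and> map \<tau> xs = ys"
    by blast
qed

end

section \<open>Points and hyperplanes\<close>

definition dot :: "'a::field^'n \<Rightarrow> 'a^'n \<Rightarrow> 'a" where
  "dot c z = (\<Sum>i\<in>UNIV. c $ i * z $ i)"

definition line :: "'a::field^'n \<Rightarrow> ('a^'n) set" where
  "line v = vec.span {v}"

definition perp :: "'a::field^'n \<Rightarrow> ('a^'n) set" where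
  "perp c = {z. dot c z = 0}"

lemma dot_add_right: "dot c (x + y) = dot c x + dot c y"
  by (simp add: dot_def sum.distrib algebra_simps)

lemma dot_add_left: "dot (x + y) c = dot x c + dot y c"
  by (simp add: dot_def sum.distrib algebra_simps)

lemma dot_diff_right: "dot c (x - y) = dot c x - dot c y"
  by (simp add: dot_def sum_subtractf algebra_simps)

lemma dot_diff_left: "dot (x - y) c = dot x c - dot y c"
  by (simp add: dot_def sum_subtractf algebra_simps)

lemma dot_scale_right: "dot c (k *s x) = k * dot c x"
  by (simp add: dot_def sum_distrib_left algebra_simps)

lemma dot_scale_left: "dot (k *s x) c = k * dot x c"
  by (simp add: dot_def sum_distrib_left algebra_simps)

lemmas dot_simps = dot_add_right dot_add_left dot_diff_right dot_diff_left
  dot_scale_right dot_scale_left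

lemma dot_commute: "dot x y = dot y x"
  by (simp add: dot_def mult.commute)

lemma dot_zero_left [simp]: "dot 0 x = 0"
  and dot_zero_right [simp]: "dot x 0 = 0"
  by (simp_all add: dot_def)

lemma dot_axis_left [simp]: "dot (axis i 1) z = z $ i"
proof -
  have "(\<Sum>j\<in>UNIV. axis i 1 $ j * z $ j) = (\<Sum>j\<in>UNIV. if i = j then z $ j else 0)"
    by (rule sum.cong) (auto simp: axis_def)
  then show ?thesis
    by (simp add: dot_def)
qed

lemma dot_axis_right [simp]: "dot z (axis i 1) = z $ i"
  using dot_axis_left dot_commute by metis

lemma line_eq_range: "line v = range (\<lambda>k. k *s v)"
  by (simp add: line_def vec.span_singleton)

lemma line_subset_perp_iff: "line v \<subseteq> perp c \<longleftrightarrow> dot c v = 0"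
proof
  assume "line v \<subseteq> perp c"
  moreover have "v \<in> line v"
    unfolding line_eq_range by (rule range_eqI[of _ _ 1]) simp
  ultimately show "dot c v = 0"
    by (auto simp: perp_def)
qed (auto simp: line_eq_range perp_def dot_scale_right)

lemma subspace_perp: "vec.subspace (perp c)"
  unfolding vec.subspace_def perp_def by (simp add: dot_simps)

lemma line_scale:
  assumes "k \<noteq> 0"
  shows "line (k *s v) = line v"
  unfolding line_eq_range
proof (intro set_eqI iffI)
  fix x assume "x \<in> range (\<lambda>t. t *s v)"
  then obtain t where "x = t *s v"
    by blast
  then have "x = (t / k) *s (k *s v)"
    using assms by simp
  then show "x \<in> range (\<lambda>t. t *s (k *s v))"
    by blast
qed auto

lemma perp_scale: "k \<noteq> 0 \<Longrightarrow> perp (k *s c) = perp c"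
  by (simp add: perp_def dot_scale_left)

lemma dim_perp:
  fixes c :: "'a::field^'n"
  assumes "c \<noteq> 0"
  shows "vec.dim (perp c) = CARD('n) - 1"
proof -
  obtain i where ci: "c $ i \<noteq> 0"
    using assms by (metis vec_eq_iff zero_index)
  have "x - (dot c x / c $ i) *s axis i 1 \<in> perp c" for x
    using ci by (simp add: perp_def dot_simps)
  then have "vec.span (insert (axis i 1) (perp c)) = UNIV"
    unfolding vec.span_insert using vec.span_base by blast
  then have "vec.dim (insert (axis i 1) (perp c)) = CARD('n)"
    by (metis vec.dim_UNIV vec.dim_span card_cart_basis)
  moreover have "axis i 1 \<notin> perp c"
    using ci by (simp add: perp_def)
  moreover have "vec.span (perp c) = perp c"
    using subspace_perp vec.span_eq_iff by blast
  ultimately show ?thesis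
    by (simp add: vec.dim_insert)
qed

lemma is_point_iff_line: "is_point p \<longleftrightarrow> (\<exists>v. v \<noteq> 0 \<and> p = line v)"
proof
  assume "is_point p"
  then have sp: "vec.subspace p" and d: "vec.dim p = 1"
    by (auto simp: is_point_def)
  obtain B where B: "B \<subseteq> p" "vec.independent B" "p \<subseteq> vec.span B" "card B = vec.dim p"
    using vec.basis_exists by blast
  then obtain v where "B = {v}"
    using d by (auto simp: card_Suc_eq)
  moreover have "vec.span B = p"
    using B sp by (metis vec.span_subspace)
  ultimately show "\<exists>v. v \<noteq> 0 \<and> p = line v"
    using B(2) vec.dependent_zero by (auto simp: line_def)
qed (auto simp: is_point_def line_def)

lemma is_hyperplane_iff_perp:
  fixes K :: "('a::field^'n) set"
  shows "is_hyperplane K \<longleftrightarrow> (\<exists>c. c \<noteq> 0 \<and> K = perp c)"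
proof
  assume "is_hyperplane K"
  then have sp: "vec.subspace K" and d: "vec.dim K = CARD('n) - 1"
    by (auto simp: is_hyperplane_def)
  have "K \<noteq> UNIV"
  proof
    assume "K = UNIV"
    then have "vec.dim K = CARD('n)"
      by (metis vec.dim_UNIV card_cart_basis)
    moreover have "0 < CARD('n)"
      by simp
    ultimately show False
      using d by linarith
  qed
  then obtain u where u: "u \<notin> K"
    by blast
  have span_K: "vec.span K = K"
    using sp vec.span_eq_iff by blast
  have "u \<notin> vec.span K"
    unfolding span_K by (rule u)
  then have "vec.dim (insert u K) = CARD('n)"
    using d by (simp add: vec.dim_insert)
  then have full: "vec.span (insert u K) = UNIV"
    by (metis vec.dim_eq_full vec.dimension_def card_cart_basis)
  have "\<exists>k. axis i 1 - k *s u \<in> K" for i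
    using full span_K unfolding vec.span_insert by blast
  then obtain f where f: "\<And>i. axis i 1 - f i *s u \<in> K"
    by metis
  define c :: "'a^'n" where "c = (\<chi> i. f i)"
  \<comment> \<open>Expanding x in the standard basis shows that the coefficient of u is the functional c.\<close>
  have key: "x - dot c x *s u \<in> K" for x
  proof -
    have "(\<Sum>i\<in>UNIV. x $ i *s (axis i 1 - f i *s u)) \<in> K"
      using f sp by (intro vec.subspace_sum vec.subspace_scale) auto
    moreover have "(\<Sum>i\<in>UNIV. x $ i *s (axis i 1 - f i *s u)) = x - dot c x *s u"
      by (simp add: vec.scale_right_diff_distrib sum_subtractf basis_expansion dot_def c_def
          vec.scale_sum_left[symmetric] mult.commute)
    ultimately show ?thesis
      by simp
  qed
  have "K = perp c"
  proof (intro set_eqI iffI)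
    fix x assume x: "x \<in> K"
    show "x \<in> perp c"
    proof (rule ccontr)
      assume "x \<notin> perp c"
      then have "dot c x \<noteq> 0"
        by (simp add: perp_def)
      moreover have "dot c x *s u \<in> K"
        using vec.subspace_diff[OF sp x key[of x]] by simp
      then have "(1 / dot c x) *s (dot c x *s u) \<in> K"
        using sp vec.subspace_scale by blast
      ultimately have "u \<in> K"
        by simp
      with u show False ..
    qed
  next
    fix x assume "x \<in> perp c"
    then show "x \<in> K"
      using key[of x] by (simp add: perp_def)
  qed
  moreover have "c \<noteq> 0"
    using calculation u by (auto simp: perp_def)
  ultimately show "\<exists>c. c \<noteq> 0 \<and> K = perp c"
    by blast
qed (auto simp: is_hyperplane_def subspace_perp dim_perp)

lemma line_neq_perp:
  fixes v c :: "'a::field^'n"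
  assumes "3 \<le> CARD('n)"
  shows "line v \<noteq> perp c"
proof
  assume eq: "line v = perp c"
  have "vec.dim (line v) \<le> 1"
    by (simp add: line_def)
  moreover have "CARD('n) - 1 \<le> vec.dim (perp c)"
  proof (cases "c = 0")
    case True
    then have "perp c = UNIV"
      by (simp add: perp_def)
    then show ?thesis
      by (simp add: card_cart_basis)
  qed (simp add: dim_perp)
  ultimately show False
    using eq assms by simp
qed

lemma perp_subset_perp_iff:
  fixes c d :: "'a::field^'n"
  assumes "c \<noteq> 0"
  shows "perp c \<subseteq> perp d \<longleftrightarrow> (\<exists>t. d = t *s c)"
proof
  assume sub: "perp c \<subseteq> perp d"
  obtain i where ci: "c $ i \<noteq> 0"
    using assms by (metis vec_eq_iff zero_index)
  have dj: "d $ j = (d $ i / c $ i) * c $ j" for j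
  proof -
    have "axis j 1 - (c $ j / c $ i) *s axis i 1 \<in> perp c"
      using ci by (simp add: perp_def dot_simps)
    with sub have "dot d (axis j 1 - (c $ j / c $ i) *s axis i 1) = 0"
      by (auto simp: perp_def)
    then show ?thesis
      by (simp add: dot_simps)
  qed
  have "d = (d $ i / c $ i) *s c"
    by (rule vec_eq_iff[THEN iffD2], rule allI) (metis dj vector_smult_component)
  then show "\<exists>t. d = t *s c" ..
qed (auto simp: perp_def dot_scale_left)

lemma dot_nonzero_witness:
  fixes y :: "'a::field^'n"
  assumes "y \<noteq> 0"
  obtains \<beta> where "\<beta> $ p = 1" "dot \<beta> y \<noteq> 0" "\<And>k. \<beta> $ k \<noteq> 0 \<Longrightarrow> k = p \<or> y $ k \<noteq> 0"
proof (cases "y $ p = 0")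
  case False
  then have "dot (axis p 1) y \<noteq> 0"
    by simp
  then show thesis
    by (intro that[of "axis p 1"]) (auto simp: axis_def)
next
  case True
  obtain j where j: "y $ j \<noteq> 0"
    using assms by (metis vec_eq_iff zero_index)
  with True have "j \<noteq> p"
    by auto
  moreover have "dot (axis p 1 + axis j 1) y \<noteq> 0"
    using True j by (simp add: dot_simps)
  ultimately show thesis
    using j by (intro that[of "axis p 1 + axis j 1"]) (auto simp: axis_def split: if_splits)
qed

section \<open>Linear automorphisms\<close>

locale linear_automorphism =
  fixes g :: "'a::field^'n \<Rightarrow> 'a^'n"
  assumes linear: "Vector_Spaces.linear (*s) (*s) g" and inj: "inj g"
begin

lemma bij: "bij g"
  using vec.linear_inj_imp_surj[OF linear inj] inj by (simp add: bij_def)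

lemma linear_automorphism_inv: "linear_automorphism (inv g)"
  using vec.inj_linear_imp_inv_linear[OF linear inj] bij_imp_bij_inv[OF bij]
  by (simp add: linear_automorphism_def bij_is_inj)

lemma image_line: "g ` line v = line (g v)"
  unfolding line_def by (simp add: vec.linear_span_image[OF linear, symmetric])

lemma image_perp:
  assumes "\<And>z. dot c' (g z) = l * dot c z" and "l \<noteq> 0"
  shows "g ` perp c = perp c'"
proof (intro set_eqI iffI)
  fix y assume "y \<in> g ` perp c"
  then show "y \<in> perp c'"
    using assms by (auto simp: perp_def)
next
  fix y assume "y \<in> perp c'"
  moreover have "y = g (inv g y)"
    using bij by (simp add: surj_f_inv_f bij_is_surj)
  ultimately have "inv g y \<in> perp c"
    using assms by (metis (mono_tags) mem_Collect_eq mult_eq_0_iff perp_def)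
  with \<open>y = g (inv g y)\<close> show "y \<in> g ` perp c"
    by blast
qed

lemma image_subset_image_iff: "g ` X \<subseteq> g ` Y \<longleftrightarrow> X \<subseteq> Y"
  by (rule inj_image_subset_iff[OF inj])

lemma is_point_image: "is_point p \<Longrightarrow> is_point (g ` p)"
  using vec.linear_subspace_image[OF linear] vec.dim_image_eq[OF linear] inj
  by (simp add: is_point_def inj_on_subset)

lemma is_hyperplane_image: "is_hyperplane K \<Longrightarrow> is_hyperplane (g ` K)"
  using vec.linear_subspace_image[OF linear] vec.dim_image_eq[OF linear] inj
  by (simp add: is_hyperplane_def inj_on_subset)

lemma Delta1_image: "X \<in> Delta1 H \<Longrightarrow> g ` X \<in> Delta1 (g ` H)"
  by (simp add: Delta1_def is_point_image image_subset_image_iff)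

lemma Delta2_image: "X \<in> Delta2 w \<Longrightarrow> g ` X \<in> Delta2 (g ` w)"
  by (simp add: Delta2_def is_hyperplane_image image_subset_image_iff)

lemma image_mem_Delta1_iff: "g ` X \<in> Delta1 (g ` H) \<longleftrightarrow> X \<in> Delta1 H"
proof
  interpret inv: linear_automorphism "inv g"
    by (rule linear_automorphism_inv)
  assume "g ` X \<in> Delta1 (g ` H)"
  then show "X \<in> Delta1 H"
    using inv.Delta1_image by (metis image_inv_f_f inj)
qed (rule Delta1_image)

lemma image_mem_Delta2_iff: "g ` X \<in> Delta2 (g ` w) \<longleftrightarrow> X \<in> Delta2 w"
proof
  interpret inv: linear_automorphism "inv g"
    by (rule linear_automorphism_inv)
  assume "g ` X \<in> Delta2 (g ` w)"
  then show "X \<in> Delta2 w"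
    using inv.Delta2_image by (metis image_inv_f_f inj)
qed (rule Delta2_image)

lemma graph_iso_image:
  "graph_iso (Delta1 H \<union> Delta2 w) (Gamma_adj w H)
     (Delta1 (g ` H) \<union> Delta2 (g ` w)) (Gamma_adj (g ` w) (g ` H)) ((`) g)"
  unfolding graph_iso_def
proof (intro conjI ballI)
  interpret inv: linear_automorphism "inv g"
    by (rule linear_automorphism_inv)
  have inv_image: "inv g ` g ` X = X" for X
    by (simp add: image_inv_f_f inj)
  show "bij_betw ((`) g) (Delta1 H \<union> Delta2 w) (Delta1 (g ` H) \<union> Delta2 (g ` w))"
  proof (rule bij_betw_byWitness[where f' = "(`) (inv g)"])
    show "(`) (inv g) ` (Delta1 (g ` H) \<union> Delta2 (g ` w)) \<subseteq> Delta1 H \<union> Delta2 w"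
      using inv.Delta1_image inv.Delta2_image inv_image by fastforce
  qed (auto simp: inv_image image_f_inv_f[OF bij_is_surj[OF bij]] Delta1_image Delta2_image)
next
  fix X Y
  show "Gamma_adj w H X Y \<longleftrightarrow> Gamma_adj (g ` w) (g ` H) (g ` X) (g ` Y)"
    unfolding Gamma_adj_def image_mem_Delta1_iff image_mem_Delta2_iff image_subset_image_iff ..
qed

lemma graph_aut_image:
  assumes "g ` w = w" "g ` H = H"
  shows "graph_aut (Delta1 H \<union> Delta2 w) (Gamma_adj w H) ((`) g)"
  using graph_iso_image[of H w] unfolding assms graph_aut_iff_iso .

end

lemma linear_automorphism_comp:
  "linear_automorphism g \<Longrightarrow> linear_automorphism h \<Longrightarrow> linear_automorphism (g \<circ> h)"
  unfolding linear_automorphism_def by (auto intro: Vector_Spaces.linear_compose inj_compose)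

definition rank1_update :: "'a::field^'n \<Rightarrow> 'a^'n \<Rightarrow> 'a^'n \<Rightarrow> 'a^'n" where
  "rank1_update \<alpha> u z = z + dot \<alpha> z *s u"

lemma dot_rank1_update: "dot c (rank1_update \<alpha> u z) = dot c z + dot \<alpha> z * dot c u"
  by (simp add: rank1_update_def dot_simps)

lemma linear_rank1_update: "Vector_Spaces.linear (*s) (*s) (rank1_update \<alpha> u)"
  unfolding Vector_Spaces.linear_iff
  by (simp add: vec.vector_space_axioms rank1_update_def dot_simps algebra_simps
      vec.scale_left_distrib vec.scale_right_distrib)

lemma image_line_rank1_update: "rank1_update \<alpha> u ` line v = line (rank1_update \<alpha> u v)"
  unfolding line_def by (simp add: vec.linear_span_image[OF linear_rank1_update, symmetric])

lemma linear_automorphism_rank1_update: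
  assumes "1 + dot \<alpha> u \<noteq> 0"
  shows "linear_automorphism (rank1_update \<alpha> u)"
proof -
  have "z = 0" if "rank1_update \<alpha> u z = 0" for z
  proof -
    have "dot \<alpha> z * (1 + dot \<alpha> u) = 0"
      using arg_cong[OF that, of "dot \<alpha>"] by (simp add: dot_rank1_update algebra_simps)
    with assms have "dot \<alpha> z = 0"
      by simp
    with that show ?thesis
      by (simp add: rank1_update_def)
  qed
  then have "inj (rank1_update \<alpha> u)"
    using vec.linear_inj_iff_eq_0[OF linear_rank1_update] by blast
  then show ?thesis
    by (simp add: linear_automorphism_def linear_rank1_update)
qed

lemma image_perp_rank1_update:
  assumes "1 + dot \<alpha> u \<noteq> 0" and "\<And>z. dot c' (rank1_update \<alpha> u z) = l * dot c z" and "l \<noteq> 0"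
  shows "rank1_update \<alpha> u ` perp c = perp c'"
proof -
  interpret linear_automorphism "rank1_update \<alpha> u"
    using linear_automorphism_rank1_update[OF assms(1)] .
  show ?thesis
    using image_perp assms(2,3) .
qed

section \<open>The graph for a standard flag\<close>

locale standard_flag =
  fixes a b d :: "'n::finite" and field :: "'a::field itself"
  assumes distinct: "a \<noteq> b" "a \<noteq> d" "b \<noteq> d"
begin

definition ea :: "'a^'n" where "ea = axis a 1"
definition eb :: "'a^'n" where "eb = axis b 1"
definition ed :: "'a^'n" where "ed = axis d 1"

definition w0 :: "('a^'n) set" where "w0 = line ea"
definition H0 :: "('a^'n) set" where "H0 = perp eb"

abbreviation VV :: "('a^'n) set set" where "VV \<equiv> Delta1 H0 \<union> Delta2 w0"
abbreviation adj :: "('a^'n) set \<Rightarrow> ('a^'n) set \<Rightarrow> bool" where "adj \<equiv> Gamma_adj w0 H0"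

lemma basis_components [simp]:
  "ea $ a = 1" "ea $ b = 0" "ea $ d = 0"
  "eb $ a = 0" "eb $ b = 1" "eb $ d = 0"
  "ed $ a = 0" "ed $ b = 0" "ed $ d = 1"
  using distinct by (simp_all add: ea_def eb_def ed_def axis_def)

lemma dot_basis [simp]:
  "dot x ea = x $ a" "dot ea x = x $ a"
  "dot x eb = x $ b" "dot eb x = x $ b"
  "dot x ed = x $ d" "dot ed x = x $ d"
  by (simp_all add: ea_def eb_def ed_def)

lemma card_ge_3: "3 \<le> CARD('n)"
proof -
  have "card {a, b, d} = 3"
    using distinct by simp
  moreover have "card {a, b, d} \<le> CARD('n)"
    by (rule card_mono) auto
  ultimately show ?thesis
    by simp
qed

lemma mem_Delta1_iff: "X \<in> Delta1 H0 \<longleftrightarrow> (\<exists>v. v $ b \<noteq> 0 \<and> X = line v)"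
proof -
  have "v $ b \<noteq> 0 \<Longrightarrow> v \<noteq> 0" for v :: "'a^'n"
    by auto
  then show ?thesis
    unfolding Delta1_def is_point_iff_line H0_def mem_Collect_eq
    using line_subset_perp_iff[of _ eb] by (metis dot_basis(4))
qed

lemma mem_Delta2_iff: "X \<in> Delta2 w0 \<longleftrightarrow> (\<exists>c. c $ a \<noteq> 0 \<and> X = perp c)"
proof -
  have "c $ a \<noteq> 0 \<Longrightarrow> c \<noteq> 0" for c :: "'a^'n"
    by auto
  then show ?thesis
    unfolding Delta2_def is_hyperplane_iff_perp w0_def mem_Collect_eq
    using line_subset_perp_iff[of ea] by (metis dot_basis(1))
qed

lemma vertex_cases [consumes 1, case_names line perp]:
  assumes "X \<in> VV"
  obtains (line) v :: "'a^'n" where "v $ b \<noteq> 0" "X = line v"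
    | (perp) c :: "'a^'n" where "c $ a \<noteq> 0" "X = perp c"
  using assms unfolding Un_iff mem_Delta1_iff mem_Delta2_iff by blast

lemma line_in_Delta1: "v $ b \<noteq> 0 \<Longrightarrow> line v \<in> Delta1 H0"
  using mem_Delta1_iff by blast

lemma perp_in_Delta2: "c $ a \<noteq> 0 \<Longrightarrow> perp c \<in> Delta2 w0"
  using mem_Delta2_iff by blast

lemma perp_notin_Delta1: "perp c \<notin> Delta1 H0"
  using line_neq_perp[OF card_ge_3] by (auto simp: mem_Delta1_iff)

lemma line_notin_Delta2: "line v \<notin> Delta2 w0"
  using line_neq_perp[OF card_ge_3] by (auto simp: mem_Delta2_iff)

lemma adj_line_perp: "v $ b \<noteq> 0 \<Longrightarrow> c $ a \<noteq> 0 \<Longrightarrow> adj (line v) (perp c) \<longleftrightarrow> dot c v = 0"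
  unfolding Gamma_adj_def
  using line_in_Delta1 perp_in_Delta2 perp_notin_Delta1 line_subset_perp_iff by blast

lemma adj_perp_line: "v $ b \<noteq> 0 \<Longrightarrow> c $ a \<noteq> 0 \<Longrightarrow> adj (perp c) (line v) \<longleftrightarrow> dot c v = 0"
  unfolding Gamma_adj_def
  using line_in_Delta1 perp_in_Delta2 perp_notin_Delta1 line_subset_perp_iff by blast

lemma not_adj_line_line: "\<not> adj (line v) (line v')"
  unfolding Gamma_adj_def using line_notin_Delta2 by blast

lemma not_adj_perp_perp: "\<not> adj (perp c) (perp c')"
  unfolding Gamma_adj_def using perp_notin_Delta1 by blast

lemma adj_in_VV: "adj x y \<Longrightarrow> x \<in> VV \<and> y \<in> VV"
  unfolding Gamma_adj_def by blast

lemma graph_aut_rank1_update: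
  fixes \<alpha> u :: "'a^'n"
  assumes nonsingular: "1 + dot \<alpha> u \<noteq> 0" and "u $ b = 0" and "\<alpha> $ a = 0 \<or> u = ea"
  shows "graph_aut VV adj ((`) (rank1_update \<alpha> u))"
proof -
  interpret linear_automorphism "rank1_update \<alpha> u"
    using linear_automorphism_rank1_update[OF nonsingular] .
  have ea: "rank1_update \<alpha> u ea = (1 + \<alpha> $ a) *s ea"
    using assms(3) by (auto simp: rank1_update_def vec.scale_left_distrib)
  have "rank1_update \<alpha> u ` w0 = line ((1 + \<alpha> $ a) *s ea)"
    unfolding w0_def image_line ea ..
  also have "\<dots> = w0"
    unfolding w0_def using assms(1,3) by (intro line_scale) auto
  finally have "rank1_update \<alpha> u ` w0 = w0" .
  moreover have "rank1_update \<alpha> u ` H0 = H0"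
    unfolding H0_def using \<open>u $ b = 0\<close> by (intro image_perp[where l = 1]) (simp_all add: dot_rank1_update)
  ultimately show ?thesis
    by (rule graph_aut_image)
qed

definition flip :: "'a^'n \<Rightarrow> 'a^'n" where
  "flip x = (\<chi> i. x $ Transposition.transpose a b i)"

definition polar :: "('a^'n) set \<Rightarrow> ('a^'n) set" where
  "polar X = {y. \<forall>x\<in>X. dot (flip x) y = 0}"

lemma flip_flip [simp]: "flip (flip x) = x"
  by (simp add: flip_def vec_eq_iff transpose_involutory)

lemma flip_components [simp]: "flip x $ a = x $ b" "flip x $ b = x $ a"
  by (simp_all add: flip_def)

lemma flip_scale: "flip (k *s x) = k *s flip x"
  by (simp add: flip_def vec_eq_iff)

lemma dot_flip_flip: "dot (flip x) (flip y) = dot x y"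
  unfolding dot_def flip_def
  by (rule sum.reindex_bij_witness[of _ "Transposition.transpose a b" "Transposition.transpose a b"]) (auto simp: transpose_involutory)

lemma dot_flip_commute: "dot (flip x) y = dot (flip y) x"
  by (metis dot_commute dot_flip_flip flip_flip)

lemma polar_line: "polar (line v) = perp (flip v)"
  unfolding polar_def perp_def line_eq_range by (auto simp: flip_scale dot_simps)

lemma polar_perp:
  assumes "c \<noteq> 0"
  shows "polar (perp c) = line (flip c)"
proof (intro set_eqI)
  fix y
  have "y \<in> polar (perp c) \<longleftrightarrow> perp c \<subseteq> perp (flip y)"
    by (auto simp: polar_def perp_def dot_flip_commute)
  also have "\<dots> \<longleftrightarrow> (\<exists>t. flip y = t *s c)"
    by (rule perp_subset_perp_iff[OF assms])
  also have "\<dots> \<longleftrightarrow> (\<exists>t. y = t *s flip c)"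
    by (metis flip_flip flip_scale)
  also have "\<dots> \<longleftrightarrow> y \<in> line (flip c)"
    by (auto simp: line_eq_range)
  finally show "y \<in> polar (perp c) \<longleftrightarrow> y \<in> line (flip c)" .
qed

lemma polar_vertex:
  assumes "X \<in> VV"
  shows "polar X \<in> VV \<and> polar (polar X) = X"
  using assms
proof (cases rule: vertex_cases)
  case (line v)
  then have "flip v $ a \<noteq> 0"
    by simp
  then have "flip v \<noteq> 0"
    by (metis zero_index)
  then show ?thesis
    using line perp_in_Delta2 by (auto simp: polar_line polar_perp)
next
  case (perp c)
  then have "flip c $ b \<noteq> 0" "c \<noteq> 0"
    by auto
  then show ?thesis
    using perp line_in_Delta1 by (auto simp: polar_line polar_perp)
qed

lemma graph_aut_polar: "graph_aut VV adj polar"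
  unfolding graph_aut_def
proof (intro conjI ballI)
  show "bij_betw polar VV VV"
    by (rule bij_betw_byWitness[where f' = polar]) (use polar_vertex in auto)
  fix X Y assume "X \<in> VV" "Y \<in> VV"
  then show "adj X Y \<longleftrightarrow> adj (polar X) (polar Y)"
  proof (cases rule: vertex_cases[case_product vertex_cases])
    case (line_perp v c)
    then have "c \<noteq> 0"
      by auto
    with line_perp show ?thesis
      by (simp add: polar_line polar_perp adj_line_perp adj_perp_line dot_flip_flip dot_commute)
  next
    case (perp_line c v)
    then have "c \<noteq> 0"
      by auto
    with perp_line show ?thesis
      by (simp add: polar_line polar_perp adj_line_perp adj_perp_line dot_flip_flip dot_commute)
  next
    case (line_line v v')
    then show ?thesis
      by (simp add: polar_line not_adj_line_line not_adj_perp_perp)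
  next
    case (perp_perp c c')
    then have "c \<noteq> 0" "c' \<noteq> 0"
      by auto
    with perp_perp show ?thesis
      by (simp add: polar_perp not_adj_line_line not_adj_perp_perp)
  qed
qed

definition P0 :: "('a^'n) set" where "P0 = line eb"
definition K1 :: "('a^'n) set" where "K1 = perp ea"
definition P2 :: "('a^'n) set" where "P2 = line (eb + ed)"
definition K3 :: "('a^'n) set" where "K3 = perp (ea + eb - ed)"
definition P4 :: "('a^'n) set" where "P4 = line (eb - ea)"

definition std_geodesic :: "('a^'n) set list" where
  "std_geodesic = [P0, K1, P2, K3, P4]"

lemma line_normalize: "v $ b \<noteq> 0 \<Longrightarrow> line ((1 / v $ b) *s v) = line v"
  by (simp add: line_scale)

lemma perp_normalize: "c $ a \<noteq> 0 \<Longrightarrow> perp ((1 / c $ a) *s c) = perp c"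
  by (simp add: perp_scale)

lemma std_geodesic_in_VV: "set std_geodesic \<subseteq> VV"
  by (simp add: std_geodesic_def P0_def K1_def P2_def K3_def P4_def line_in_Delta1 perp_in_Delta2)

lemma P0_in_VV: "P0 \<in> VV"
  using std_geodesic_in_VV by (simp add: std_geodesic_def)

lemma aut_onto_line:
  assumes "v $ b \<noteq> 0"
  obtains \<sigma> where "graph_aut VV adj \<sigma>" "\<sigma> P0 = line v"
proof -
  define v' where "v' = (1 / v $ b) *s v"
  have v'b: "v' $ b = 1"
    using assms by (simp add: v'_def)
  have "rank1_update eb (v' - eb) eb = v'"
    using v'b by (simp add: rank1_update_def)
  then have "rank1_update eb (v' - eb) ` P0 = line v"
    unfolding P0_def image_line_rank1_update v'_def using line_normalize[OF assms] by simp
  moreover have "graph_aut VV adj ((`) (rank1_update eb (v' - eb)))"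
    by (rule graph_aut_rank1_update) (simp_all add: dot_simps v'b)
  ultimately show thesis
    using that by blast
qed

lemma vertex_transitive:
  assumes "X \<in> VV"
  obtains \<sigma> where "graph_aut VV adj \<sigma>" "\<sigma> P0 = X"
  using assms
proof (cases rule: vertex_cases)
  case (line v)
  then show thesis
    using aut_onto_line that by blast
next
  case (perp c)
  then have "flip c $ b \<noteq> 0"
    by simp
  then obtain \<tau> where \<tau>: "graph_aut VV adj \<tau>" "\<tau> P0 = line (flip c)"
    by (rule aut_onto_line)
  have "(polar \<circ> \<tau>) P0 = X"
    using \<tau>(2) perp by (simp add: polar_line)
  with graph_aut_comp[OF graph_aut_polar \<tau>(1)] show thesis
    by (rule that)
qed

lemma aut_fixing_P0_onto:
  assumes "adj P0 X"
  obtains \<sigma> where "graph_aut VV adj \<sigma>" "\<sigma> P0 = P0" "\<sigma> K1 = X"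
proof -
  from adj_in_VV[OF assms] have "X \<in> VV"
    by blast
  then show thesis
  proof (cases rule: vertex_cases)
    case (line v)
    then show thesis
      using assms not_adj_line_line by (simp add: P0_def)
  next
    case (perp c)
    then have cb: "c $ b = 0"
      using assms adj_line_perp[of eb c] by (simp add: P0_def)
    define c' where "c' = (1 / c $ a) *s c"
    have c'a: "c' $ a = 1" and c'b: "c' $ b = 0"
      using perp cb by (simp_all add: c'_def)
    define g where "g = rank1_update (ea - c') ea"
    have "g eb = eb"
      by (simp add: g_def rank1_update_def dot_simps c'b)
    then have "g ` P0 = P0"
      by (simp add: g_def P0_def image_line_rank1_update)
    moreover have "graph_aut VV adj ((`) g)"
      unfolding g_def by (rule graph_aut_rank1_update) (simp_all add: dot_simps c'a)
    moreover have "g ` K1 = X"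
    proof -
      have "g ` perp ea = perp c'"
        unfolding g_def
        by (rule image_perp_rank1_update[where l = 1]) (simp_all add: dot_rank1_update dot_simps c'a)
      then show ?thesis
        using perp by (simp add: K1_def c'_def perp_normalize)
    qed
    ultimately show thesis
      using that by blast
  qed
qed

lemma aut_fixing_P0_K1_onto:
  assumes "adj K1 X" "X \<noteq> P0"
  obtains \<sigma> where "graph_aut VV adj \<sigma>" "\<sigma> P0 = P0" "\<sigma> K1 = K1" "\<sigma> P2 = X"
proof -
  from adj_in_VV[OF assms(1)] have "X \<in> VV"
    by blast
  then show thesis
  proof (cases rule: vertex_cases)
    case (perp c)
    then show thesis
      using assms not_adj_perp_perp by (simp add: K1_def)
  next
    case (line v)
    have va: "v $ a = 0"
      using assms line adj_perp_line[of v ea] by (simp add: K1_def)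
    define v' where "v' = (1 / v $ b) *s v"
    have v'b: "v' $ b = 1" and v'a: "v' $ a = 0"
      using line va by (simp_all add: v'_def)
    have X: "X = line v'"
      unfolding v'_def line_normalize[OF line(1)] by (rule line(2))
    define y where "y = v' - eb"
    have ya: "y $ a = 0" and yb: "y $ b = 0"
      using v'a v'b by (simp_all add: y_def)
    have "y \<noteq> 0"
      using assms(2) X by (auto simp: y_def P0_def)
    \<comment> \<open>a functional \<beta> vanishing at a and b with \<beta>(y) \<noteq> 0, so that the update moves eb + ed to v'\<close>
    then obtain \<beta> where \<beta>: "\<beta> $ d = 1" "dot \<beta> y \<noteq> 0" "\<And>k. \<beta> $ k \<noteq> 0 \<Longrightarrow> k = d \<or> y $ k \<noteq> 0"
      by (rule dot_nonzero_witness[where p = d]) blast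
    have \<beta>a: "\<beta> $ a = 0" and \<beta>b: "\<beta> $ b = 0"
      using \<beta>(3) ya yb distinct by blast+
    define u where "u = y - ed"
    have ua: "u $ a = 0" and ub: "u $ b = 0"
      using ya yb by (simp_all add: u_def)
    have nonsingular: "1 + dot \<beta> u \<noteq> 0"
      using \<beta>(1,2) by (simp add: u_def dot_simps)
    define g where "g = rank1_update \<beta> u"
    have "g eb = eb"
      by (simp add: g_def rank1_update_def \<beta>b)
    then have "g ` P0 = P0"
      by (simp add: g_def P0_def image_line_rank1_update)
    moreover have "graph_aut VV adj ((`) g)"
      unfolding g_def by (rule graph_aut_rank1_update[OF nonsingular ub]) (simp add: \<beta>a)
    moreover have "g ` K1 = K1"
      unfolding g_def K1_def
      by (rule image_perp_rank1_update[OF nonsingular, where l = 1]) (simp_all add: dot_rank1_update ua)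
    moreover have "g ` P2 = X"
    proof -
      have "g (eb + ed) = v'"
        using \<beta>(1) \<beta>b by (simp add: g_def rank1_update_def dot_simps u_def y_def)
      then show ?thesis
        by (simp add: P2_def g_def image_line_rank1_update X)
    qed
    ultimately show thesis
      using that by blast
  qed
qed

lemma aut_fixing_P0_K1_P2_onto:
  assumes "adj P2 X" "\<not> adj P0 X"
  obtains \<sigma> where "graph_aut VV adj \<sigma>" "\<sigma> P0 = P0" "\<sigma> K1 = K1" "\<sigma> P2 = P2" "\<sigma> K3 = X"
proof -
  from adj_in_VV[OF assms(1)] have "X \<in> VV"
    by blast
  then show thesis
  proof (cases rule: vertex_cases)
    case (line v)
    then show thesis
      using assms not_adj_line_line by (simp add: P2_def)
  next
    case (perp c)
    have cbd: "c $ b + c $ d = 0"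
      using assms perp adj_line_perp[of "eb + ed" c] by (simp add: P2_def dot_simps)
    have cb: "c $ b \<noteq> 0"
      using assms perp adj_line_perp[of eb c] by (simp add: P0_def)
    define c' where "c' = (1 / c $ a) *s c"
    define t where "t = c' $ b"
    have "c $ d = - c $ b"
      using cbd by (simp add: eq_neg_iff_add_eq_0 add.commute)
    then have c'a: "c' $ a = 1" and t: "t \<noteq> 0" and c'd: "c' $ d = - t"
      using perp cb by (simp_all add: c'_def t_def)
    have X: "X = perp c'"
      unfolding c'_def perp_normalize[OF perp(1)] by (rule perp(2))
    \<comment> \<open>first rescale the a-coordinate by t, then shear along ed\<close>
    define cm where "cm = ea + t *s eb - t *s ed"
    define g where "g = rank1_update ((t - 1) *s ea) ea"
    have g_nonsingular: "1 + dot ((t - 1) *s ea) ea \<noteq> 0"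
      using t by (simp add: dot_simps)
    have g_aut: "graph_aut VV adj ((`) g)"
      unfolding g_def by (rule graph_aut_rank1_update[OF g_nonsingular]) simp_all
    have "g eb = eb" "g (eb + ed) = eb + ed"
      by (simp_all add: g_def rank1_update_def dot_simps)
    then have g_P: "g ` P0 = P0" "g ` P2 = P2"
      by (simp_all add: g_def P0_def P2_def image_line_rank1_update)
    have g_K1: "g ` K1 = K1"
      unfolding K1_def g_def
      by (rule image_perp_rank1_update[OF g_nonsingular, where l = t])
        (simp_all add: t dot_rank1_update dot_simps algebra_simps)
    have g_K3: "g ` K3 = perp cm"
      unfolding K3_def g_def
      by (rule image_perp_rank1_update[OF g_nonsingular, where l = t])
        (simp_all add: t dot_rank1_update dot_simps algebra_simps cm_def)
    define \<psi> where "\<psi> = (1 / t) *s (c' - cm)"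
    have \<psi>: "\<psi> $ a = 0" "\<psi> $ b = 0" "\<psi> $ d = 0"
      using c'a c'd by (simp_all add: \<psi>_def t_def cm_def)
    define h where "h = rank1_update \<psi> ed"
    have h_nonsingular: "1 + dot \<psi> ed \<noteq> 0"
      using \<psi> by simp
    have h_aut: "graph_aut VV adj ((`) h)"
      unfolding h_def by (rule graph_aut_rank1_update[OF h_nonsingular]) (simp_all add: \<psi>)
    have "h eb = eb" "h (eb + ed) = eb + ed"
      using \<psi> by (simp_all add: h_def rank1_update_def dot_simps)
    then have h_P: "h ` P0 = P0" "h ` P2 = P2"
      by (simp_all add: h_def P0_def P2_def image_line_rank1_update)
    have h_K1: "h ` K1 = K1"
      unfolding K1_def h_def
      by (rule image_perp_rank1_update[OF h_nonsingular, where l = 1]) (simp_all add: dot_rank1_update)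
    have h_K3: "h ` perp cm = perp c'"
      unfolding h_def
    proof (rule image_perp_rank1_update[OF h_nonsingular, where l = 1])
      fix z
      have "dot \<psi> z * t = dot c' z - dot cm z"
        using t by (simp add: \<psi>_def dot_simps field_simps)
      then show "dot c' (rank1_update \<psi> ed z) = 1 * dot cm z"
        by (simp add: dot_rank1_update c'd)
    qed simp
    show thesis
    proof (rule that[of "((`) h) \<circ> ((`) g)"])
      show "graph_aut VV adj (((`) h) \<circ> ((`) g))"
        using graph_aut_comp[OF h_aut g_aut] .
    qed (simp_all add: g_P g_K1 g_K3 h_P h_K1 h_K3 X)
  qed
qed

lemma P4_unique:
  assumes "adj K3 X" "\<And>Y. \<not> (adj P0 Y \<and> adj Y X)"
  shows "X = P4"
proof -
  from adj_in_VV[OF assms(1)] have "X \<in> VV"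
    by blast
  then show ?thesis
  proof (cases rule: vertex_cases)
    case (perp c)
    then show ?thesis
      using assms not_adj_perp_perp by (simp add: K3_def)
  next
    case (line v)
    have on_K3: "v $ a + v $ b - v $ d = 0"
      using assms line adj_perp_line[of v "ea + eb - ed"] by (simp add: K3_def dot_simps)
    \<comment> \<open>a nonzero coordinate j \<notin> {a, b} would give a common neighbour of P0 and X\<close>
    have vj: "v $ j = 0" if j: "j \<noteq> a" "j \<noteq> b" for j
    proof (rule ccontr)
      assume vj: "v $ j \<noteq> 0"
      define c where "c = ea - (v $ a / v $ j) *s axis j 1"
      have "(axis j 1 :: 'a^'n) $ a = 0" "(axis j 1 :: 'a^'n) $ b = 0"
        using j by (simp_all add: axis_def)
      then have ca: "c $ a = 1" and cb: "c $ b = 0" and "dot c v = 0"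
        using vj by (simp_all add: c_def dot_simps)
      have "adj P0 (perp c)"
        using adj_line_perp[of eb c] ca cb by (simp add: P0_def)
      moreover have "adj (perp c) X"
        using adj_perp_line[of v c] ca line \<open>dot c v = 0\<close> by simp
      ultimately show False
        using assms(2) by blast
    qed
    have "v = v $ b *s (eb - ea)"
      unfolding vec_eq_iff
    proof
      fix i
      show "v $ i = (v $ b *s (eb - ea)) $ i"
        using on_K3 vj[of d] vj[of i] distinct
        by (cases "i = a"; cases "i = b") (auto simp: ea_def eb_def axis_def eq_neg_iff_add_eq_0)
    qed
    then have "line v = P4"
      unfolding P4_def using line_scale[OF line(1)] by metis
    with line show ?thesis
      by simp
  qed
qed

lemma gdist_P0_le_4:
  assumes "X \<in> VV"
  shows "gdist VV adj P0 X \<le> 4"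
  using assms
proof (cases rule: vertex_cases)
  case (line v)
  show ?thesis
  proof (cases "\<exists>j. j \<noteq> a \<and> j \<noteq> b \<and> v $ j \<noteq> 0")
    case True
    then obtain j where j: "j \<noteq> a" "j \<noteq> b" "v $ j \<noteq> 0"
      by blast
    define c where "c = ea - (v $ a / v $ j) *s axis j 1"
    have "(axis j 1 :: 'a^'n) $ a = 0" "(axis j 1 :: 'a^'n) $ b = 0"
      using j by (simp_all add: axis_def)
    then have ca: "c $ a = 1" and cb: "c $ b = 0" and "dot c v = 0"
      using j by (simp_all add: c_def dot_simps)
    then have "is_walk VV adj [P0, perp c, X]"
      using adj_line_perp[of eb c] adj_perp_line[of v c] ca cb line adj_in_VV
      by (simp add: P0_def)
    from gdist_le_walk[OF this] show ?thesis
      by simp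
  next
    case False
    then have vd: "v $ d = 0"
      using distinct by metis
    define c where "c = ea - (v $ a / v $ b) *s eb + (v $ a / v $ b) *s ed"
    have ca: "c $ a = 1"
      by (simp add: c_def)
    have "adj P0 K1" "adj K1 P2" "adj P2 (perp c)"
      using adj_line_perp[of eb ea] adj_perp_line[of "eb + ed" ea] adj_line_perp[of "eb + ed" c] ca
      by (simp_all add: P0_def K1_def P2_def c_def dot_simps)
    moreover have "dot c v = 0"
      using vd line(1) by (simp add: c_def dot_simps)
    then have "adj (perp c) X"
      using adj_perp_line[of v c] ca line by simp
    ultimately have "is_walk VV adj [P0, K1, P2, perp c, X]"
      using adj_in_VV by simp
    from gdist_le_walk[OF this] show ?thesis
      by simp
  qed
next
  case (perp c)
  show ?thesis
  proof (cases "c $ b = 0")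
    case True
    then have "is_walk VV adj [P0, X]"
      using adj_line_perp[of eb c] perp adj_in_VV by (simp add: P0_def)
    from gdist_le_walk[OF this] show ?thesis
      by simp
  next
    case False
    define s where "s = - (c $ b + c $ d) / c $ a"
    define v where "v = eb + s *s ea + ed"
    define c' where "c' = ea - s *s ed"
    have "dot c v = 0"
      using perp(1) by (simp add: v_def s_def dot_simps field_simps)
    then have "adj (line v) X"
      using adj_line_perp[of v c] perp by (simp add: v_def)
    moreover have "adj P0 (perp c')" "adj (perp c') (line v)"
      using adj_line_perp[of eb c'] adj_perp_line[of v c']
      by (simp_all add: P0_def c'_def v_def dot_simps)
    ultimately have "is_walk VV adj [P0, perp c', line v, X]"
      using adj_in_VV by simp
    from gdist_le_walk[OF this] show ?thesis
      by simp
  qed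
qed

lemma gdist_le_4:
  assumes "X \<in> VV" "Y \<in> VV"
  shows "gdist VV adj X Y \<le> 4"
proof -
  obtain \<sigma> where \<sigma>: "graph_aut VV adj \<sigma>" "\<sigma> P0 = X"
    using vertex_transitive[OF assms(1)] .
  then have iso: "graph_iso VV adj VV adj \<sigma>"
    by (simp add: graph_aut_iff_iso)
  let ?Y = "inv_into VV \<sigma> Y"
  have "?Y \<in> VV" "\<sigma> ?Y = Y"
    using graph_iso_mem[OF graph_iso_inv_into[OF iso] assms(2)] graph_iso_inv_into_right[OF iso assms(2)]
    by simp_all
  then show ?thesis
    using gdist_iso[OF iso P0_in_VV] gdist_P0_le_4 \<sigma>(2) by metis
qed

lemma length_geodesic_le_5:
  assumes "is_geodesic VV adj zs"
  shows "length zs \<le> 5"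
proof -
  have walk: "is_walk VV adj zs"
    using assms by (simp add: is_geodesic_def)
  then have "zs \<noteq> []" "set zs \<subseteq> VV"
    by (simp_all add: is_walk_def)
  then have "zs ! 0 \<in> set zs" "zs ! (length zs - 1) \<in> set zs"
    by (simp_all add: nth_mem)
  with \<open>set zs \<subseteq> VV\<close> have "gdist VV adj (zs ! 0) (zs ! (length zs - 1)) \<le> 4"
    by (intro gdist_le_4) auto
  with geodesic_gdist_nth[OF assms, of "length zs - 1"] \<open>zs \<noteq> []\<close> show ?thesis
    by simp
qed

lemma stabiliser_transitive_on_extensions:
  assumes "0 < k" "k < 5"
    and X: "adj (std_geodesic ! (k - 1)) X" "gdist VV adj P0 X = k"
  shows "\<exists>\<tau>. graph_aut VV adj \<tau> \<and> map \<tau> (take k std_geodesic) = take k std_geodesic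
    \<and> \<tau> (std_geodesic ! k) = X"
proof -
  have short: "k < length ws" if "is_walk VV adj ws" "hd ws = P0" "last ws = X" for ws
    using gdist_le_walk[OF that(1)] that X(2) by (cases ws) auto
  consider "k = 1" | "k = 2" | "k = 3" | "k = 4"
    using assms(1,2) by linarith
  then show ?thesis
  proof cases
    case 1
    with X(1) have "adj P0 X"
      by (simp add: std_geodesic_def)
    then obtain \<tau> where "graph_aut VV adj \<tau>" "\<tau> P0 = P0" "\<tau> K1 = X"
      by (rule aut_fixing_P0_onto)
    with 1 show ?thesis
      by (intro exI[of _ \<tau>]) (simp add: std_geodesic_def)
  next
    case 2
    with X(1) have "adj K1 X"
      by (simp add: std_geodesic_def)
    moreover have "X \<noteq> P0"
    proof
      assume "X = P0"
      with short[of "[P0]"] 2 P0_in_VV show False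
        by simp
    qed
    ultimately obtain \<tau> where "graph_aut VV adj \<tau>" "\<tau> P0 = P0" "\<tau> K1 = K1" "\<tau> P2 = X"
      by (rule aut_fixing_P0_K1_onto)
    with 2 show ?thesis
      by (intro exI[of _ \<tau>]) (simp add: std_geodesic_def)
  next
    case 3
    with X(1) have "adj P2 X"
      by (simp add: std_geodesic_def)
    moreover have "\<not> adj P0 X"
    proof
      assume "adj P0 X"
      then have "is_walk VV adj [P0, X]"
        using adj_in_VV by simp
      with short[of "[P0, X]"] 3 show False
        by simp
    qed
    ultimately obtain \<tau> where
      "graph_aut VV adj \<tau>" "\<tau> P0 = P0" "\<tau> K1 = K1" "\<tau> P2 = P2" "\<tau> K3 = X"
      by (rule aut_fixing_P0_K1_P2_onto)
    with 3 show ?thesis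
      by (intro exI[of _ \<tau>]) (simp add: std_geodesic_def)
  next
    case 4
    with X(1) have "adj K3 X"
      by (simp add: std_geodesic_def)
    moreover have "\<not> (adj P0 Y \<and> adj Y X)" for Y
    proof
      assume "adj P0 Y \<and> adj Y X"
      then have "is_walk VV adj [P0, Y, X]"
        using adj_in_VV[of P0 Y] adj_in_VV[of Y X] by simp
      with short[of "[P0, Y, X]"] 4 show False
        by simp
    qed
    ultimately have "X = P4"
      by (rule P4_unique)
    with 4 show ?thesis
      by (intro exI[of _ id]) (simp add: graph_aut_id std_geodesic_def)
  qed
qed

lemma extend_std_geodesic:
  assumes geod: "is_geodesic VV adj zs" and k: "k < length zs"
    and prefix: "take k zs = take k std_geodesic"
  shows "\<exists>\<tau>. graph_aut VV adj \<tau> \<and> map \<tau> (take k std_geodesic) = take k std_geodesic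
    \<and> \<tau> (std_geodesic ! k) = zs ! k"
proof (cases "k = 0")
  case True
  have "zs ! 0 \<in> VV"
    using geod k nth_mem[of 0 zs] unfolding is_geodesic_def is_walk_def by blast
  then obtain \<tau> where "graph_aut VV adj \<tau>" "\<tau> P0 = zs ! 0"
    by (rule vertex_transitive)
  with True show ?thesis
    by (intro exI[of _ \<tau>]) (simp add: std_geodesic_def)
next
  case False
  have "zs ! i = std_geodesic ! i" if "i < k" for i
    using prefix that by (metis nth_take)
  then have "zs ! 0 = P0" "zs ! (k - 1) = std_geodesic ! (k - 1)"
    using False by (simp_all add: std_geodesic_def)
  moreover have "adj (zs ! (k - 1)) (zs ! k)"
    using geod k False by (simp add: is_geodesic_def is_walk_def) (metis Suc_pred not_gr0)
  moreover have "k < 5"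
    using length_geodesic_le_5[OF geod] k by simp
  ultimately show ?thesis
    using False geodesic_gdist_nth[OF geod k] by (intro stabiliser_transitive_on_extensions) simp_all
qed

lemma geodesic_transitive_standard: "geodesic_transitive VV adj"
proof (rule geodesic_transitive_by_standard_geodesic[where S = std_geodesic])
  show "set std_geodesic \<subseteq> VV"
    by (rule std_geodesic_in_VV)
  show "length zs \<le> length std_geodesic" if "is_geodesic VV adj zs" for zs
    using length_geodesic_le_5[OF that] by (simp add: std_geodesic_def)
  show "\<exists>\<tau>. graph_aut VV adj \<tau> \<and> map \<tau> (take k std_geodesic) = take k std_geodesic
      \<and> \<tau> (std_geodesic ! k) = zs ! k"
    if "is_geodesic VV adj zs" "k < length zs" "take k zs = take k std_geodesic" for zs k
    using extend_std_geodesic that .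
qed

lemma aut_onto_hyperplane:
  fixes c :: "'a^'n"
  assumes "c \<noteq> 0"
  obtains g where "linear_automorphism g" "\<And>z. dot c (g z) = z $ b"
proof -
  obtain \<beta> where \<beta>: "\<beta> $ b = 1" "dot \<beta> c \<noteq> 0"
    using dot_nonzero_witness[OF assms, of b] by blast
  define k where "k = dot c \<beta>"
  have k: "k \<noteq> 0"
    using \<beta>(2) by (simp add: k_def dot_commute)
  define \<alpha> where "\<alpha> = (1 / k) *s (eb - c)"
  have "1 + dot \<alpha> \<beta> = 1 / k"
    using \<beta>(1) k by (simp add: \<alpha>_def dot_simps k_def dot_commute field_simps)
  with k have "linear_automorphism (rank1_update \<alpha> \<beta>)"
    by (intro linear_automorphism_rank1_update) simp
  moreover have "dot c (rank1_update \<alpha> \<beta> z) = z $ b" for z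
    using k by (simp add: dot_rank1_update \<alpha>_def dot_simps k_def field_simps)
  ultimately show thesis
    by (rule that)
qed

lemma aut_fixing_H0_onto_line:
  assumes "v \<noteq> 0" "v $ b = 0"
  obtains g where "linear_automorphism g" "g ` H0 = H0" "g ` w0 = line v"
proof -
  obtain \<beta> where \<beta>: "\<beta> $ a = 1" "dot \<beta> v \<noteq> 0"
    using dot_nonzero_witness[OF assms(1), of a] by blast
  have nonsingular: "1 + dot \<beta> (v - ea) \<noteq> 0"
    using \<beta> by (simp add: dot_simps)
  have ea: "rank1_update \<beta> (v - ea) ea = v"
    using \<beta>(1) by (simp add: rank1_update_def)
  show thesis
  proof (rule that[OF linear_automorphism_rank1_update[OF nonsingular]])
    show "rank1_update \<beta> (v - ea) ` H0 = H0"
      unfolding H0_def using assms(2)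
      by (intro image_perp_rank1_update[OF nonsingular, where l = 1]) (simp_all add: dot_rank1_update dot_simps)
    show "rank1_update \<beta> (v - ea) ` w0 = line v"
      using ea by (simp add: w0_def image_line_rank1_update)
  qed
qed

lemma flag_transitive:
  assumes "is_point w" "is_hyperplane H" "w \<subseteq> H"
  obtains g where "linear_automorphism g" "g ` w0 = w" "g ` H0 = H"
proof -
  obtain c where c: "c \<noteq> 0" "H = perp c"
    using assms(2) is_hyperplane_iff_perp by blast
  obtain v where v: "v \<noteq> 0" "w = line v"
    using assms(1) is_point_iff_line by blast
  have "dot c v = 0"
    using assms(3) c v line_subset_perp_iff by blast
  obtain g where g: "linear_automorphism g" "\<And>z. dot c (g z) = z $ b"
    by (rule aut_onto_hyperplane[OF c(1)]) blast
  interpret g: linear_automorphism g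
    by (rule g(1))
  define v' where "v' = inv g v"
  have gv': "g v' = v"
    unfolding v'_def using g.bij by (simp add: bij_is_surj surj_f_inv_f)
  have "v' \<noteq> 0"
    using gv' v(1) vec.linear_0[OF g.linear] by auto
  moreover have "v' $ b = 0"
    using g(2)[of v'] gv' \<open>dot c v = 0\<close> by simp
  ultimately obtain h where h: "linear_automorphism h" "h ` H0 = H0" "h ` w0 = line v'"
    by (rule aut_fixing_H0_onto_line)
  have "g ` H0 = H"
    unfolding H0_def c(2) by (rule g.image_perp[where l = 1]) (simp_all add: g(2))
  moreover have "g ` line v' = w"
    using gv' v(2) by (simp add: g.image_line)
  ultimately show thesis
    by (intro that[OF linear_automorphism_comp[OF g(1) h(1)]]) (simp_all only: image_comp[symmetric] h(2,3))
qed

end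

theorem proposition3p4:
  fixes w H :: "('a::{field,finite} ^ 'n) set"
  assumes "CARD('n) \<ge> 3"
    and "is_point w" and "is_hyperplane H" and "w \<subseteq> H"
  shows "geodesic_transitive (Delta1 H \<union> Delta2 w) (Gamma_adj w H)"
proof -
  obtain T :: "'n set" where "card T = 3"
    using obtain_subset_with_card_n[OF assms(1)] by blast
  then obtain a b d :: 'n where "a \<noteq> b" "a \<noteq> d" "b \<noteq> d"
    unfolding card_3_iff by blast
  then interpret standard_flag a b d "TYPE('a)"
    by unfold_locales
  obtain g where g: "linear_automorphism g" "g ` w0 = w" "g ` H0 = H"
    by (rule flag_transitive[OF assms(2-4)])
  interpret g: linear_automorphism g
    by (rule g(1))
  have "graph_iso VV adj (Delta1 H \<union> Delta2 w) (Gamma_adj w H) ((`) g)"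
    using g.graph_iso_image[of H0 w0] unfolding g(2,3) .
  then show ?thesis
    by (rule geodesic_transitive_iso[OF _ geodesic_transitive_standard])
qed

end
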